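(* Let $n\ge 3$ and let $f=x^n+a_{n-1}x^{n-1}+\cdots+a_1x+a_0$ with complex coefficients, with roots $r_1,\ldots,r_n$ over $\mathbb{C}$ (listed with multiplicity). Let \[D_2=\prod_{\substack{1\le i,j,k\le n\\ i<j,\ j\ne k,\ k\ne i}}(2r_k-r_i-r_j).\] For each integer $m$ put $\varphi_m(x)=f^{(m)}(x)/m!$ if $1\le m\le n$ and $\varphi_m=0$ if $m\le 0$ or $m>n$, where $f^{(m)}$ is the $m$th derivative of $f$ with respect to $x$. Let $M$ be the infinite matrix whose entries, for $s\ge 1$ and $l\ge 1$, are \[M_{2s-1,\,l}=\varphi_{2(l-s)+2},\qquad M_{2s,\,l}=\varphi_{2(l-s)+1},\] so that its rows are $(\varphi_2,\varphi_4,\varphi_6,\ldots)$, $(\varphi_1,\varphi_3,\varphi_5,\ldots)$, $(0,\varphi_2,\varphi_4,\ldots)$, $(0,\varphi_1,\varphi_3,\ldots)$, $(0,0,\varphi_2,\ldots)$, etc. Let $H=H(x)$ be the $(n-2)$th leading principal minor of $M$ (the determinant of its upper-left $(n-2)\times(n-2)$ block). Then \[D_2=\operatorname{res}(f,H,x),\] the Sylvester resultant of $f$ and $H$ with respect to $x$.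
   Context: $f^{(m)}$ denotes the $m$th derivative of $f$ with respect to $x$; $\operatorname{res}(\cdot,\cdot,x)$ is the Sylvester resultant with respect to $x$. *)

theory Defs
  imports Complex_Main "Subresultants.Resultant_Prelim"
begin

definition phi :: "complex poly \<Rightarrow> int \<Rightarrow> complex poly" where
  "phi f m = (if 1 \<le> m \<and> m \<le> int (degree f)
              then smult (1 / fact (nat m)) ((pderiv ^^ nat m) f) else 0)"

definition Mentry :: "complex poly \<Rightarrow> nat \<Rightarrow> nat \<Rightarrow> complex poly" where
  "Mentry f r l = (if odd r then phi f (2 * (int l - int ((r + 1) div 2)) + 2)
                   else phi f (2 * (int l - int (r div 2)) + 1))"

definition leading_minor :: "complex poly \<Rightarrow> nat \<Rightarrow> complex poly" where
  "leading_minor f k = det (mat k k (\<lambda>(i, j). Mentry f (i + 1) (j + 1)))"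

end

theory Submission
  imports Defs "Subresultants.Coeff_Int"
begin

text \<open>Since \<open>f\<close> is monic with roots \<open>r\<^sub>1, \<dots>, r\<^sub>n\<close>, the resultant \<open>res(f, H)\<close> is the product
  of the values \<open>H(r\<^sub>k)\<close>. Translating \<open>x\<close> by \<open>r\<^sub>k\<close> turns \<open>\<phi>\<^sub>m(r\<^sub>k)\<close> into the coefficient
  of \<open>x^(m - 1)\<close> in \<open>h\<^sub>k = f(x + r\<^sub>k) / x\<close>, a monic polynomial whose roots are the
  \<open>r\<^sub>i - r\<^sub>k\<close> with \<open>i \<noteq> k\<close>; hence \<open>H(r\<^sub>k)\<close> is the Hurwitz determinant of order \<open>n - 2\<close>
  of \<open>h\<^sub>k\<close>. By Orlando's formula that determinant is the product of \<open>-s\<^sub>i - s\<^sub>j\<close> over the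
  pairs of roots of \<open>h\<^sub>k\<close>, i.e. of \<open>2 r\<^sub>k - r\<^sub>i - r\<^sub>j\<close>.

  Orlando's formula follows by induction on the number of roots: bordering the Hurwitz matrix
  of \<open>h\<close> by the column \<open>(t\<^sup>i)\<close> and evaluating the determinant by two different row operations
  shows that multiplying \<open>h\<close> by \<open>x - t\<close> multiplies the Hurwitz determinant by \<open>h(-t)\<close>.\<close>

lemma det_eq_entry_cofactor_col:
  assumes "A \<in> carrier_mat n n" "i < n" "j < n"
    and "\<And>i'. i' < n \<Longrightarrow> i' \<noteq> i \<Longrightarrow> A $$ (i', j) = 0"
  shows "det A = A $$ (i, j) * cofactor A i j"
proof -
  have "det A = (\<Sum>i'<n. A $$ (i', j) * cofactor A i' j)"
    using assms(1,3) by (rule laplace_expansion_column)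
  also have "\<dots> = A $$ (i, j) * cofactor A i j"
    using assms(2,4) by (subst sum.remove[of _ i]) (auto intro!: sum.neutral)
  finally show ?thesis .
qed

lemma det_eq_entry_cofactor_row:
  assumes "A \<in> carrier_mat n n" "i < n" "j < n"
    and "\<And>j'. j' < n \<Longrightarrow> j' \<noteq> j \<Longrightarrow> A $$ (i, j') = 0"
  shows "det A = A $$ (i, j) * cofactor A i j"
proof -
  have "det A = (\<Sum>j'<n. A $$ (i, j') * cofactor A i j')"
    using assms(1,2) by (rule laplace_expansion_row)
  also have "\<dots> = A $$ (i, j) * cofactor A i j"
    using assms(3,4) by (subst sum.remove[of _ j]) (auto intro!: sum.neutral)
  finally show ?thesis .
qed

lemma sum_two_point_support:
  assumes "finite A" "i \<noteq> j"
  shows "(\<Sum>k\<in>A. if k = i then f k else if k = j then g k else 0)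
    = (if i \<in> A then f i else 0) + (if j \<in> A then g j else (0::'a::comm_monoid_add))"
proof -
  have "(\<Sum>k\<in>A. if k = i then f k else if k = j then g k else 0)
      = (\<Sum>k\<in>A. if k = i then f k else 0) + (\<Sum>k\<in>A. if k = j then g k else 0)"
    using assms(2) by (subst sum.distrib[symmetric]) (auto intro!: sum.cong)
  then show ?thesis
    using assms(1) by (simp add: sum.delta)
qed

definition bidiag_mat :: "nat \<Rightarrow> 'a \<Rightarrow> nat set \<Rightarrow> 'a::comm_ring_1 mat" where
  "bidiag_mat n a D = mat n n (\<lambda>(i, k). if k = i then 1 else if k = Suc i \<and> i \<in> D then a else 0)"

lemma bidiag_mat_dim [simp]: "dim_row (bidiag_mat n a D) = n" "dim_col (bidiag_mat n a D) = n"
  by (simp_all add: bidiag_mat_def)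

lemma bidiag_mat_carrier [simp]: "bidiag_mat n a D \<in> carrier_mat n n"
  by (simp add: carrier_matI)

lemma det_bidiag_mat [simp]: "det (bidiag_mat n a D) = 1"
proof -
  have "det (bidiag_mat n a D) = prod_list (diag_mat (bidiag_mat n a D))"
    by (rule det_upper_triangular) (auto simp: upper_triangular_def bidiag_mat_def)
  also have "\<dots> = 1"
    unfolding prod_list_diag_prod by (auto simp: bidiag_mat_def intro!: prod.neutral)
  finally show ?thesis .
qed

lemma bidiag_mat_mult_index:
  assumes "A \<in> carrier_mat n m" "i < n" "j < m"
  shows "(bidiag_mat n a D * A) $$ (i, j)
    = A $$ (i, j) + (if Suc i < n \<and> i \<in> D then a * A $$ (Suc i, j) else 0)"
proof -
  have "(bidiag_mat n a D * A) $$ (i, j)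
      = (\<Sum>k\<in>{0..<n}. if k = i then A $$ (k, j) else if k = Suc i then
           (if i \<in> D then a * A $$ (k, j) else 0) else 0)"
    using assms by (auto simp: bidiag_mat_def scalar_prod_def intro!: sum.cong)
  also have "\<dots> = A $$ (i, j) + (if Suc i < n then (if i \<in> D then a * A $$ (Suc i, j) else 0) else 0)"
    by (subst sum_two_point_support) (use assms(2) in auto)
  finally show ?thesis by simp
qed

lemma mult_bidiag_mat_index:
  assumes "A \<in> carrier_mat m n" "i < m" "j < n"
  shows "(A * bidiag_mat n a D) $$ (i, j)
    = A $$ (i, j) + (if 0 < j \<and> j - 1 \<in> D then a * A $$ (i, j - 1) else 0)"
proof (cases j)
  case 0
  then show ?thesis
    using assms by (simp add: bidiag_mat_def scalar_prod_def if_distrib[of "(*) _"] cong: if_cong)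
next
  case (Suc j')
  then have "(A * bidiag_mat n a D) $$ (i, j)
      = (\<Sum>k\<in>{0..<n}. if k = j then A $$ (i, k) else if k = j' then
           (if j' \<in> D then a * A $$ (i, k) else 0) else 0)"
    using assms by (auto simp: bidiag_mat_def scalar_prod_def intro!: sum.cong)
  also have "\<dots> = A $$ (i, j) + (if j' \<in> D then a * A $$ (i, j') else 0)"
    by (subst sum_two_point_support) (use assms(3) Suc in auto)
  finally show ?thesis using Suc by simp
qed

lemma transpose_bidiag_mat_mult_index:
  assumes "A \<in> carrier_mat n m" "i < n" "j < m"
  shows "(transpose_mat (bidiag_mat n a D) * A) $$ (i, j)
    = A $$ (i, j) + (if 0 < i \<and> i - 1 \<in> D then a * A $$ (i - 1, j) else 0)"
proof -
  have "transpose_mat (bidiag_mat n a D) * A = transpose_mat (transpose_mat A * bidiag_mat n a D)"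
    using transpose_mult[of "transpose_mat A" m n "bidiag_mat n a D" n] assms(1) by simp
  moreover have "dim_row A = n" "dim_col A = m"
    using assms(1) by auto
  ultimately show ?thesis
    using assms(2,3) mult_bidiag_mat_index[of "transpose_mat A" m n j i a D] by auto
qed

section \<open>Resultants with a product of linear factors\<close>

definition coeff_rows_mat :: "nat \<Rightarrow> (nat \<Rightarrow> 'a::zero poly) \<Rightarrow> 'a mat" where
  "coeff_rows_mat n P = mat n n (\<lambda>(i, j). coeff (P i) (n - 1 - j))"

lemma coeff_rows_mat_dim [simp]: "dim_row (coeff_rows_mat n P) = n" "dim_col (coeff_rows_mat n P) = n"
  by (simp_all add: coeff_rows_mat_def)

lemma coeff_rows_mat_carrier [simp]: "coeff_rows_mat n P \<in> carrier_mat n n"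
  by (simp add: carrier_matI)

lemma coeff_rows_mat_cong:
  "(\<And>i. i < n \<Longrightarrow> P i = P' i) \<Longrightarrow> coeff_rows_mat n P = coeff_rows_mat n P'"
  by (auto simp: coeff_rows_mat_def intro!: eq_matI)

lemma sylvester_mat_sub_eq_coeff_rows_mat:
  fixes p q :: "'a::comm_ring_1 poly"
  assumes "degree p \<le> m" "degree q \<le> d"
  shows "sylvester_mat_sub m d p q = coeff_rows_mat (m + d)
    (\<lambda>i. if i < d then monom 1 (d - 1 - i) * p else monom 1 (m + d - 1 - i) * q)"
  unfolding sylvester_mat_sub_def coeff_rows_mat_def
  by (rule eq_matI) (use assms in \<open>auto simp: coeff_monom_mult intro!: coeff_eq_0\<close>)

lemma bidiag_mat_mult_coeff_rows_mat:
  fixes P :: "nat \<Rightarrow> 'a::comm_ring_1 poly"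
  shows "bidiag_mat n (- a) D * coeff_rows_mat n P
    = coeff_rows_mat n (\<lambda>i. if i \<in> D \<and> Suc i < n then P i - smult a (P (Suc i)) else P i)"
    (is "_ = ?R")
proof (rule eq_matI)
  fix i j
  assume "i < dim_row ?R" and "j < dim_col ?R"
  then have "i < n" "j < n" by auto
  then show "(bidiag_mat n (- a) D * coeff_rows_mat n P) $$ (i, j) = ?R $$ (i, j)"
    by (subst bidiag_mat_mult_index[of _ n n]) (auto simp: coeff_rows_mat_def)
qed auto

lemma coeff_rows_mat_linear_factor:
  fixes Q :: "nat \<Rightarrow> 'a::comm_ring_1 poly"
  assumes "\<And>i e. i < Suc n \<Longrightarrow> n \<le> e \<Longrightarrow> coeff (Q i) e = 0"
  shows "coeff_rows_mat (Suc n) (\<lambda>i. [:- a, 1:] * Q i + [:c i:])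
    = mat (Suc n) (Suc n) (\<lambda>(i, j). if j < n then coeff (Q i) (n - 1 - j) else c i)
      * bidiag_mat (Suc n) (- a) UNIV"
    (is "?P = ?M * ?U")
proof (rule eq_matI)
  fix i j
  assume "i < dim_row (?M * ?U)" and "j < dim_col (?M * ?U)"
  then have i: "i < Suc n" and j: "j < Suc n" by auto
  have "coeff ([:- a, 1:] * Q i + [:c i:]) e
      = (if e = 0 then c i else coeff (Q i) (e - 1)) - a * coeff (Q i) e" for e
    by (auto simp: coeff_pCons')
  then have "?P $$ (i, j) = (if j = n then c i else coeff (Q i) (n - 1 - j)) - a * coeff (Q i) (n - j)"
    using i j by (auto simp: coeff_rows_mat_def Suc_diff_Suc)
  then show "?P $$ (i, j) = (?M * ?U) $$ (i, j)"
    using i j assms[OF i, of n] assms[OF i, of 0]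
    by (subst mult_bidiag_mat_index[of _ "Suc n" "Suc n"]) (auto simp: Suc_diff_Suc)
qed auto

lemma det_coeff_rows_mat_linear_factor:
  fixes Q :: "nat \<Rightarrow> 'a::comm_ring_1 poly"
  assumes "\<And>i e. i < Suc n \<Longrightarrow> n \<le> e \<Longrightarrow> coeff (Q i) e = 0"
  shows "det (coeff_rows_mat (Suc n) (\<lambda>i. [:- a, 1:] * Q i + [:if i = n then c else 0:]))
    = c * det (coeff_rows_mat n Q)"
proof -
  define M where "M = mat (Suc n) (Suc n)
    (\<lambda>(i, j). if j < n then coeff (Q i) (n - 1 - j) else if i = n then c else 0)"
  have "coeff_rows_mat (Suc n) (\<lambda>i. [:- a, 1:] * Q i + [:if i = n then c else 0:])
      = M * bidiag_mat (Suc n) (- a) UNIV"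
    unfolding M_def using coeff_rows_mat_linear_factor[of n Q a "\<lambda>i. if i = n then c else 0"] assms
    by simp
  then have "det (coeff_rows_mat (Suc n) (\<lambda>i. [:- a, 1:] * Q i + [:if i = n then c else 0:]))
      = det M"
    using det_mult[of M "Suc n" "bidiag_mat (Suc n) (- a) UNIV"] by (simp add: M_def)
  also have "\<dots> = M $$ (n, n) * cofactor M n n"
    by (rule det_eq_entry_cofactor_col[of _ "Suc n"]) (auto simp: M_def)
  also have "cofactor M n n = det (coeff_rows_mat n Q)"
  proof -
    have "mat_delete M n n = coeff_rows_mat n Q"
      by (rule eq_matI) (auto simp: M_def mat_delete_def coeff_rows_mat_def)
    then show ?thesis
      by (simp add: cofactor_def flip: power_add mult_2)
  qed
  finally show ?thesis
    by (simp add: M_def)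
qed

lemma det_sylvester_mat_sub_linear_factor:
  fixes p q :: "'a::comm_ring_1 poly"
  assumes dp: "degree p \<le> m" and dq: "degree q \<le> d"
  shows "det (sylvester_mat_sub (Suc m) d ([:- a, 1:] * p) q) = poly q a * det (sylvester_mat_sub m d p q)"
proof -
  define n where "n = m + d"
  define P where "P = (\<lambda>i. if i < d then monom 1 (d - 1 - i) * ([:- a, 1:] * p)
    else monom 1 (n - i) * q)"
  define Q where "Q i = (if i < d then monom 1 (d - 1 - i) * p
    else if i < n then monom 1 (n - 1 - i) * q else synthetic_div q a)" for i
  have "degree ([:- a, 1:] * p) \<le> Suc m"
    using degree_mult_le[of "[:- a, 1:]" p] dp by auto
  from sylvester_mat_sub_eq_coeff_rows_mat[OF this dq]
  have "sylvester_mat_sub (Suc m) d ([:- a, 1:] * p) q = coeff_rows_mat (Suc n) P"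
    by (simp add: P_def n_def cong: if_cong)
  then have "det (sylvester_mat_sub (Suc m) d ([:- a, 1:] * p) q)
      = det (bidiag_mat (Suc n) (- a) {d..} * coeff_rows_mat (Suc n) P)"
    using det_mult[of "bidiag_mat (Suc n) (- a) {d..}" "Suc n" "coeff_rows_mat (Suc n) P"] by simp
  \<comment> \<open>subtracting \<open>a\<close> times the next row from each \<open>q\<close>-row makes every row divisible by
    \<open>x - a\<close>, up to the remainder \<open>q(a)\<close> in the last one\<close>
  also have "bidiag_mat (Suc n) (- a) {d..} * coeff_rows_mat (Suc n) P
      = coeff_rows_mat (Suc n) (\<lambda>i. [:- a, 1:] * Q i + [:if i = n then poly q a else 0:])"
  proof -
    have "(if i \<in> {d..} \<and> Suc i < Suc n then P i - smult a (P (Suc i)) else P i)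
        = [:- a, 1:] * Q i + [:if i = n then poly q a else 0:]" if i: "i < Suc n" for i
    proof -
      consider "i < d" | "d \<le> i" "i < n" | "i = n" using i by linarith
      then show ?thesis
      proof cases
        case 2
        then obtain l where "n - i = Suc l" "n - Suc i = l" "n - 1 - i = l"
          by (metis Suc_diff_Suc diff_Suc_eq_diff_pred)
        with 2 show ?thesis by (simp add: P_def Q_def monom_Suc algebra_simps)
      qed (auto simp: P_def Q_def n_def synthetic_div_correct algebra_simps)
    qed
    then show ?thesis
      by (subst bidiag_mat_mult_coeff_rows_mat) (auto simp: coeff_rows_mat_def intro!: eq_matI)
  qed
  also have "det (coeff_rows_mat (Suc n) (\<lambda>i. [:- a, 1:] * Q i + [:if i = n then poly q a else 0:]))
      = poly q a * det (coeff_rows_mat n Q)"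
  proof (rule det_coeff_rows_mat_linear_factor)
    fix i e assume "i < Suc n" "n \<le> e"
    then show "coeff (Q i) e = 0"
      using dp dq by (cases "degree q = 0") (auto simp: Q_def n_def coeff_monom_mult
          degree_synthetic_div synthetic_div_eq_0_iff[THEN iffD2] coeff_eq_0)
  qed
  also have "coeff_rows_mat n Q = sylvester_mat_sub m d p q"
    unfolding sylvester_mat_sub_eq_coeff_rows_mat[OF dp dq] n_def
    by (rule coeff_rows_mat_cong) (simp add: Q_def n_def)
  finally show ?thesis .
qed

lemma degree_prod_linear_factors:
  "finite I \<Longrightarrow> degree (\<Prod>i\<in>I. [:- s i, 1:] :: 'a::idom poly) = card I"
  by (subst degree_prod_sum_eq) auto

lemma det_sylvester_mat_sub_prod_linear_factors:
  fixes q :: "'a::idom poly"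
  assumes "finite I" and "degree q \<le> d"
  shows "det (sylvester_mat_sub (card I) d (\<Prod>i\<in>I. [:- s i, 1:]) q) = (\<Prod>i\<in>I. poly q (s i))"
  using assms(1)
proof (induction I rule: finite_induct)
  case empty
  have "sylvester_mat_sub 0 d 1 q = 1\<^sub>m d"
    by (rule eq_matI) (auto simp: sylvester_mat_sub_def)
  then show ?case by simp
next
  case (insert x F)
  then show ?case
    using det_sylvester_mat_sub_linear_factor[OF _ assms(2), of "\<Prod>i\<in>F. [:- s i, 1:]" "card F" "s x"]
    by (simp add: degree_prod_linear_factors)
qed

lemma resultant_prod_linear_factors:
  fixes g :: "'a::idom poly"
  assumes "finite I"
  shows "resultant (\<Prod>i\<in>I. [:- s i, 1:]) g = (\<Prod>i\<in>I. poly g (s i))"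
  unfolding resultant_def sylvester_mat_def degree_prod_linear_factors[OF assms]
  using assms by (rule det_sylvester_mat_sub_prod_linear_factors) simp

section \<open>Orlando's formula for Hurwitz determinants\<close>

definition hurwitz_mat :: "'a::zero poly \<Rightarrow> nat \<Rightarrow> 'a mat" where
  "hurwitz_mat h k = mat k k (\<lambda>(i, j). coeff_int h (2 * int j - int i + 1))"

lemma coeff_int_linear_factor:
  fixes h :: "'a::comm_ring_1 poly"
  shows "coeff_int ([:- t, 1:] * h) z = coeff_int h (z - 1) - t * coeff_int h z"
proof (cases "z > 0")
  case True
  then have "nat z = Suc (nat (z - 1))" by auto
  with True show ?thesis by (simp add: coeff_int_def coeff_pCons' algebra_simps)
qed (auto simp: coeff_int_def)

lemma alternating_coeff_convolution_odd:
  fixes h :: "'a::{idom, ring_char_0} poly"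
  assumes "degree h \<le> N" and "odd m"
  shows "(\<Sum>k\<le>N. (-1) ^ k * coeff h k * coeff_int h (int m - int k)) = 0"
proof -
  define g where "g k = (-1) ^ k * coeff h k * coeff_int h (int m - int k)" for k
  have "(\<Sum>k\<le>N. g k) = (\<Sum>k\<le>N + m. g k)"
    by (rule sum.mono_neutral_left) (use assms(1) in \<open>auto simp: g_def coeff_eq_0\<close>)
  also have "\<dots> = (\<Sum>k\<le>m. g k)"
    by (rule sum.mono_neutral_right) (auto simp: g_def coeff_int_def)
  finally have sum_eq: "(\<Sum>k\<le>N. g k) = (\<Sum>k\<le>m. g k)" .
  have g_reflect: "g (m - k) = - g k" if "k \<le> m" for k
  proof -
    have "(-1::'a) ^ (m - k) = (-1) ^ (m - k + 2 * k)"
      by (simp add: power_add)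
    also have "m - k + 2 * k = m + k"
      using that by simp
    also have "(-1::'a) ^ (m + k) = - ((-1) ^ k)"
      using assms(2) by (simp add: power_add)
    finally show ?thesis
      using that by (simp add: g_def coeff_int_def of_nat_diff nat_diff_distrib)
  qed
  have "(\<Sum>k\<le>m. g k) = (\<Sum>k\<le>m. g (m - k))"
    by (intro sum.reindex_bij_witness[where i = "\<lambda>k. m - k" and j = "\<lambda>k. m - k"]) auto
  also have "\<dots> = - (\<Sum>k\<le>m. g k)"
    using g_reflect by (simp add: sum_negf)
  finally have "(\<Sum>k\<le>m. g k) + (\<Sum>k\<le>m. g k) = 0"
    by (simp add: eq_neg_iff_add_eq_0)
  then have "(\<Sum>k\<le>m. g k) = 0"
    by (simp flip: mult_2)
  with sum_eq show ?thesis
    by (simp add: g_def)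
qed

definition hurwitz_bordered_mat :: "'a::comm_ring_1 poly \<Rightarrow> 'a \<Rightarrow> nat \<Rightarrow> 'a mat" where
  "hurwitz_bordered_mat h t k = mat (Suc k) (Suc k)
    (\<lambda>(i, j). if j < k then coeff_int h (2 * int j - int i + 1) else t ^ i)"

lemma hurwitz_bordered_mat_dim [simp]:
  "dim_row (hurwitz_bordered_mat h t k) = Suc k" "dim_col (hurwitz_bordered_mat h t k) = Suc k"
  by (simp_all add: hurwitz_bordered_mat_def)

lemma hurwitz_bordered_mat_carrier [simp]: "hurwitz_bordered_mat h t k \<in> carrier_mat (Suc k) (Suc k)"
  by (simp add: carrier_matI)

text \<open>Subtracting \<open>t\<close> times each row from the next clears the border column and multiplies
  the Hurwitz entries by \<open>x - t\<close>.\<close>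

lemma det_hurwitz_bordered_mat_shift:
  "det (hurwitz_bordered_mat h t k) = (-1) ^ k * det (hurwitz_mat ([:- t, 1:] * h) k)"
proof -
  define B where "B = hurwitz_bordered_mat h t k"
  define L where "L = transpose_mat (bidiag_mat (Suc k) (- t) UNIV)"
  have LB: "(L * B) $$ (i, j) = (if i = 0 then B $$ (0, j)
      else if j < k then coeff_int ([:- t, 1:] * h) (2 * int j - int i + 2) else 0)"
    if "i < Suc k" "j < Suc k" for i j
  proof -
    have "(L * B) $$ (i, j) = B $$ (i, j) + (if 0 < i \<and> i - 1 \<in> UNIV then - t * B $$ (i - 1, j) else 0)"
      unfolding L_def by (rule transpose_bidiag_mat_mult_index) (use that in \<open>simp_all add: B_def\<close>)
    then show ?thesis
      using that by (auto simp: B_def hurwitz_bordered_mat_def coeff_int_linear_factor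
          power_Suc[symmetric] algebra_simps)
  qed
  have dims: "dim_row L = Suc k" "dim_col B = Suc k"
    by (simp_all add: L_def B_def)
  then have LB_carrier: "L * B \<in> carrier_mat (Suc k) (Suc k)"
    by (intro carrier_matI) simp_all
  have "det B = det (L * B)"
    using det_mult[of L "Suc k" B] by (simp add: L_def B_def det_transpose[OF bidiag_mat_carrier])
  also have "\<dots> = (L * B) $$ (0, k) * cofactor (L * B) 0 k"
    by (rule det_eq_entry_cofactor_col[of _ "Suc k"]) (simp_all add: LB LB_carrier)
  also have "\<dots> = (-1) ^ k * det (hurwitz_mat ([:- t, 1:] * h) k)"
  proof -
    have "(L * B) $$ (0, k) = 1"
      by (simp add: LB) (simp add: B_def hurwitz_bordered_mat_def)
    moreover have "mat_delete (L * B) 0 k = hurwitz_mat ([:- t, 1:] * h) k"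
      by (rule eq_matI) (use dims in \<open>auto simp: mat_delete_def LB hurwitz_mat_def algebra_simps
          simp del: index_mult_mat(1)\<close>)
    ultimately show ?thesis
      by (simp add: cofactor_def)
  qed
  finally show ?thesis
    by (simp add: B_def)
qed

definition last_row_combination_mat :: "nat \<Rightarrow> (nat \<Rightarrow> 'a) \<Rightarrow> 'a::comm_ring_1 mat" where
  "last_row_combination_mat k w = mat (Suc k) (Suc k) (\<lambda>(i, l). if i < k then (if l = i then 1 else 0) else w l)"

lemma last_row_combination_mat_dim [simp]:
  "dim_row (last_row_combination_mat k w) = Suc k" "dim_col (last_row_combination_mat k w) = Suc k"
  by (simp_all add: last_row_combination_mat_def)

lemma det_last_row_combination_mat: "det (last_row_combination_mat k w) = w k"
proof -
  have "det (last_row_combination_mat k w) = prod_list (diag_mat (last_row_combination_mat k w))"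
    by (rule det_lower_triangular[of "Suc k"]) (auto simp: last_row_combination_mat_def)
  also have "\<dots> = (\<Prod>i<k. last_row_combination_mat k w $$ (i, i)) * last_row_combination_mat k w $$ (k, k)"
    by (simp add: prod_list_diag_prod last_row_combination_mat_def atLeast0LessThan)
  also have "\<dots> = w k"
    by (simp add: last_row_combination_mat_def)
  finally show ?thesis .
qed

lemma last_row_combination_mat_mult_index:
  assumes "A \<in> carrier_mat (Suc k) m" "i < Suc k" "j < m"
  shows "(last_row_combination_mat k w * A) $$ (i, j)
    = (if i < k then A $$ (i, j) else (\<Sum>l\<le>k. w l * A $$ (l, j)))"
  using assms by (auto simp: last_row_combination_mat_def scalar_prod_def if_distrib[of "\<lambda>x. x * _"]
      sum.delta atLeast0LessThan lessThan_Suc_atMost cong: if_cong)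

text \<open>Replacing the last row by the combination with weights \<open>(-1)^l h\<^sub>l\<close> evaluates
  \<open>h(-t)\<close> in the border column and, since \<open>h(x) h(-x)\<close> is even, kills the Hurwitz entries.\<close>

lemma hurwitz_bordered_mat_alternating_row:
  fixes h :: "'a::{idom, ring_char_0} poly"
  assumes "degree h = k" and "j < Suc k"
  shows "(\<Sum>l\<le>k. (-1) ^ l * coeff h l * hurwitz_bordered_mat h t k $$ (l, j))
    = (if j < k then 0 else poly h (- t))"
proof -
  have "(\<Sum>l\<le>k. (-1) ^ l * coeff h l * hurwitz_bordered_mat h t k $$ (l, j))
      = (\<Sum>l\<le>k. (-1) ^ l * coeff h l *
        (if j < k then coeff_int h (int (2 * j + 1) - int l) else t ^ l))"
    using assms(2) by (intro sum.cong) (auto simp: hurwitz_bordered_mat_def algebra_simps)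
  also have "\<dots> = (if j < k then 0 else poly h (- t))"
  proof (cases "j < k")
    case True
    then show ?thesis
      using alternating_coeff_convolution_odd[of h k "2 * j + 1"] assms(1) by simp
  next
    case False
    then show ?thesis
      using assms(1) by (simp add: poly_altdef power_minus' algebra_simps)
  qed
  finally show ?thesis .
qed

lemma det_hurwitz_bordered_mat_alternating:
  fixes h :: "'a::{idom, ring_char_0} poly"
  assumes "lead_coeff h = 1"
  shows "(-1) ^ degree h * det (hurwitz_bordered_mat h t (degree h))
    = poly h (- t) * det (hurwitz_mat h (degree h))"
proof -
  define k where "k = degree h"
  define B where "B = hurwitz_bordered_mat h t k"
  define L where "L = last_row_combination_mat k (\<lambda>l. (-1) ^ l * coeff h l)"
  have dims: "dim_row L = Suc k" "dim_col B = Suc k"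
    by (simp_all add: L_def B_def)
  have B_index: "B $$ (i, j) = (if j < k then coeff_int h (2 * int j - int i + 1) else t ^ i)"
    if "i < Suc k" "j < Suc k" for i j
    using that by (simp add: B_def hurwitz_bordered_mat_def)
  have LB: "(L * B) $$ (i, j)
      = (if i < k then B $$ (i, j) else (\<Sum>l\<le>k. (-1) ^ l * coeff h l * B $$ (l, j)))"
    if "i < Suc k" "j < Suc k" for i j
    unfolding L_def by (rule last_row_combination_mat_mult_index) (use that in \<open>simp_all add: B_def\<close>)
  have last_row: "(L * B) $$ (k, j) = (if j < k then 0 else poly h (- t))" if "j < Suc k" for j
    using that LB[OF _ that] by (simp add: B_def k_def hurwitz_bordered_mat_alternating_row)
  have L_carrier: "L \<in> carrier_mat (Suc k) (Suc k)"
    by (simp add: L_def carrier_matI)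
  have LB_carrier: "L * B \<in> carrier_mat (Suc k) (Suc k)"
    using dims by (intro carrier_matI) simp_all
  have "det L = (-1) ^ k"
    using assms by (simp add: L_def det_last_row_combination_mat k_def)
  then have "(-1) ^ k * det B = det (L * B)"
    using det_mult[OF L_carrier, of B] by (simp add: B_def)
  also have "\<dots> = (L * B) $$ (k, k) * cofactor (L * B) k k"
    by (rule det_eq_entry_cofactor_row[of _ "Suc k"]) (simp_all add: LB_carrier last_row)
  also have "\<dots> = poly h (- t) * det (hurwitz_mat h k)"
  proof -
    have "mat_delete (L * B) k k = hurwitz_mat h k"
      by (rule eq_matI) (use dims in \<open>auto simp: mat_delete_def LB B_index hurwitz_mat_def
          simp del: index_mult_mat(1)\<close>)
    then show ?thesis
      by (simp add: last_row cofactor_def)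
  qed
  finally show ?thesis
    by (simp add: k_def B_def)
qed

lemma det_hurwitz_mat_drop_last:
  assumes "lead_coeff h = 1" and "degree h = Suc k"
  shows "det (hurwitz_mat h (Suc k)) = det (hurwitz_mat h k)"
proof -
  let ?H = "hurwitz_mat h (Suc k)"
  have "det ?H = ?H $$ (k, k) * cofactor ?H k k"
    by (rule det_eq_entry_cofactor_col[of _ "Suc k"])
      (use assms(2) in \<open>auto simp: hurwitz_mat_def carrier_matI intro!: coeff_int_eq_0\<close>)
  also have "?H $$ (k, k) = 1"
    using assms by (simp add: hurwitz_mat_def coeff_int_def nat_add_distrib)
  also have "cofactor ?H k k = det (hurwitz_mat h k)"
  proof -
    have "mat_delete ?H k k = hurwitz_mat h k"
      by (rule eq_matI) (auto simp: mat_delete_def hurwitz_mat_def)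
    then show ?thesis
      by (simp add: cofactor_def flip: power_add mult_2)
  qed
  finally show ?thesis by simp
qed

lemma det_hurwitz_mat_linear_factor:
  fixes h :: "'a::{idom, ring_char_0} poly"
  assumes "lead_coeff h = 1" and "degree h = Suc k"
  shows "det (hurwitz_mat ([:- t, 1:] * h) (Suc k)) = poly h (- t) * det (hurwitz_mat h k)"
proof -
  have "det (hurwitz_mat ([:- t, 1:] * h) (Suc k))
      = (-1) ^ Suc k * det (hurwitz_bordered_mat h t (Suc k))"
    by (simp add: det_hurwitz_bordered_mat_shift flip: power_add mult_2)
  also have "\<dots> = poly h (- t) * det (hurwitz_mat h (Suc k))"
    using det_hurwitz_bordered_mat_alternating[OF assms(1), of t] assms(2) by simp
  finally show ?thesis
    using det_hurwitz_mat_drop_last[OF assms] by simp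
qed

lemma prod_ordered_pairs_insert:
  fixes g :: "'b::linorder \<Rightarrow> 'b \<Rightarrow> 'a::comm_monoid_mult"
  assumes "finite F" "x \<notin> F" and sym: "\<And>i j. g i j = g j i"
  shows "(\<Prod>(i, j) \<in> {(i, j). i \<in> insert x F \<and> j \<in> insert x F \<and> i < j}. g i j)
    = (\<Prod>j\<in>F. g x j) * (\<Prod>(i, j) \<in> {(i, j). i \<in> F \<and> j \<in> F \<and> i < j}. g i j)"
proof -
  let ?pair = "\<lambda>j. (min x j, max x j)"
  have split: "{(i, j). i \<in> insert x F \<and> j \<in> insert x F \<and> i < j}
      = ?pair ` F \<union> {(i, j). i \<in> F \<and> j \<in> F \<and> i < j}"
  proof (rule Set.set_eqI, rule iffI)
    fix p assume "p \<in> {(i, j). i \<in> insert x F \<and> j \<in> insert x F \<and> i < j}"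
    then obtain i j where p: "p = (i, j)" "i \<in> insert x F" "j \<in> insert x F" "i < j" by blast
    then consider "i = x" "j \<in> F" | "j = x" "i \<in> F" | "i \<in> F" "j \<in> F" by blast
    then show "p \<in> ?pair ` F \<union> {(i, j). i \<in> F \<and> j \<in> F \<and> i < j}"
    proof cases
      case 1
      with p have "p = ?pair j" by simp
      with 1 show ?thesis by blast
    next
      case 2
      with p have "p = ?pair i" by (auto simp: min_def max_def)
      with 2 show ?thesis by blast
    qed (use p in blast)
  next
    fix p assume "p \<in> ?pair ` F \<union> {(i, j). i \<in> F \<and> j \<in> F \<and> i < j}"
    then show "p \<in> {(i, j). i \<in> insert x F \<and> j \<in> insert x F \<and> i < j}"
    proof
      assume "p \<in> ?pair ` F"
      then obtain j where "j \<in> F" "p = ?pair j" by blast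
      moreover from \<open>j \<in> F\<close> assms(2) have "x < j \<or> j < x" by (metis linorder_neqE)
      ultimately show ?thesis by auto
    qed blast
  qed
  have "inj_on ?pair F"
    using assms(2) by (auto simp: inj_on_def min_def max_def split: if_splits)
  moreover have "g (min x j) (max x j) = g x j" for j
    by (cases "x \<le> j") (simp_all add: sym)
  ultimately have "(\<Prod>(i, j) \<in> ?pair ` F. g i j) = (\<Prod>j\<in>F. g x j)"
    by (simp add: prod.reindex)
  moreover have "finite {(i, j). i \<in> F \<and> j \<in> F \<and> i < j}"
    using assms(1) by (auto intro: finite_subset[of _ "F \<times> F"])
  ultimately show ?thesis
    unfolding split using assms by (subst prod.union_disjoint) (auto simp: min_def max_def split: if_splits)
qed

lemma det_hurwitz_mat_prod_linear_factors:
  fixes s :: "'b::linorder \<Rightarrow> 'a::{idom, ring_char_0}"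
  assumes "finite I" and "I \<noteq> {}"
  shows "det (hurwitz_mat (\<Prod>i\<in>I. [:- s i, 1:]) (card I - 1))
    = (\<Prod>(i, j) \<in> {(i, j). i \<in> I \<and> j \<in> I \<and> i < j}. - s i - s j)"
  using assms
proof (induction I rule: finite_ne_induct)
  case (singleton x)
  have no_pairs: "{(i, j). i \<in> {x} \<and> j \<in> {x} \<and> i < j} = {}" by auto
  show ?case unfolding no_pairs by (simp add: hurwitz_mat_def)
next
  case (insert x F)
  define h where "h = (\<Prod>i\<in>F. [:- s i, 1:])"
  obtain k where k: "card F = Suc k"
    using insert(1,2) by (metis card_0_eq not0_implies_Suc)
  have "lead_coeff h = 1"
    unfolding h_def lead_coeff_prod by simp
  moreover have "degree h = Suc k"
    using insert(1) k by (simp add: h_def degree_prod_linear_factors)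
  ultimately have "det (hurwitz_mat ([:- s x, 1:] * h) (Suc k)) = poly h (- s x) * det (hurwitz_mat h k)"
    by (rule det_hurwitz_mat_linear_factor)
  moreover have "poly h (- s x) = (\<Prod>j\<in>F. - s x - s j)"
    unfolding h_def poly_prod by (rule prod.cong) (simp_all add: algebra_simps)
  ultimately show ?case
    using insert k prod_ordered_pairs_insert[of F x "\<lambda>i j. - s i - s j"]
    by (simp add: h_def algebra_simps)
qed

section \<open>The leading minor at a root\<close>

lemma higher_pderiv_pcompose_linear:
  "(pderiv ^^ m) (p \<circ>\<^sub>p [:c, 1:]) = ((pderiv ^^ m) p) \<circ>\<^sub>p [:c, 1:]"
  by (induction m) (auto simp: pderiv_pcompose pderiv_pCons)

lemma poly_higher_pderiv_eq_coeff_shift: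
  fixes f :: "'a::{idom, ring_char_0} poly"
  shows "poly ((pderiv ^^ m) f) x = fact m * coeff (f \<circ>\<^sub>p [:x, 1:]) m"
proof -
  define g where "g = f \<circ>\<^sub>p [:x, 1:]"
  have "[:x, 1:] \<circ>\<^sub>p [:- x, 1:] = [:0, 1::'a:]"
    by (simp add: pcompose_pCons)
  then have "f = g \<circ>\<^sub>p [:- x, 1:]"
    by (simp add: g_def flip: pcompose_assoc)
  then have "poly ((pderiv ^^ m) f) x = poly ((pderiv ^^ m) g) 0"
    by (simp add: higher_pderiv_pcompose_linear poly_pcompose)
  also have "\<dots> = fact m * coeff g m"
    by (simp add: poly_0_coeff_0 coeff_higher_pderiv pochhammer_fact)
  finally show ?thesis
    by (simp add: g_def)
qed

lemma Mentry_eq_phi: "Mentry f (Suc i) (Suc j) = phi f (2 * int j - int i + 2)"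
proof (cases "odd i")
  case True
  then have "Mentry f (Suc i) (Suc j) = phi f (2 * (int (Suc j) - int (Suc i div 2)) + 1)"
    by (simp add: Mentry_def)
  also have "2 * (int (Suc j) - int (Suc i div 2)) + 1 = 2 * int j - int i + 2"
    using True by presburger
  finally show ?thesis .
next
  case False
  then have "Mentry f (Suc i) (Suc j) = phi f (2 * (int (Suc j) - int ((Suc i + 1) div 2)) + 2)"
    by (simp add: Mentry_def)
  also have "2 * (int (Suc j) - int ((Suc i + 1) div 2)) + 2 = 2 * int j - int i + 2"
    using False by presburger
  finally show ?thesis .
qed

lemma poly_phi_at_root:
  assumes "f \<circ>\<^sub>p [:x, 1:] = pCons 0 h"
  shows "poly (phi f m) x = coeff_int h (m - 1)"
proof -
  have deg: "degree f = degree (pCons 0 h)"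
    using degree_pcompose[of f "[:x, 1:]"] assms by simp
  consider "m < 1" | "1 \<le> m" "m \<le> int (degree f)" | "int (degree f) < m"
    by linarith
  then show ?thesis
  proof cases
    case 2
    then have "poly (phi f m) x = poly ((pderiv ^^ nat m) f) x / fact (nat m)"
      by (simp add: phi_def)
    also have "\<dots> = coeff (pCons 0 h) (nat m)"
      by (simp add: poly_higher_pderiv_eq_coeff_shift assms)
    also have "nat m = Suc (nat (m - 1))"
      using 2 by simp
    finally show ?thesis
      using 2 by (simp add: coeff_int_def)
  next
    case 3
    with deg have "coeff h (nat (m - 1)) = 0"
      by (cases "h = 0") (auto intro!: coeff_eq_0)
    with 3 show ?thesis
      by (simp add: phi_def coeff_int_def)
  qed (simp add: phi_def coeff_int_def)
qed

lemma poly_leading_minor_at_root: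
  assumes "f \<circ>\<^sub>p [:x, 1:] = pCons 0 h"
  shows "poly (leading_minor f k) x = det (hurwitz_mat h k)"
proof -
  have "poly (leading_minor f k) x
      = det (map_mat (\<lambda>p. poly p x) (mat k k (\<lambda>(i, j). Mentry f (i + 1) (j + 1))))"
    unfolding leading_minor_def by (simp add: comm_ring_hom.hom_det[OF poly_hom.comm_ring_hom_axioms])
  also have "map_mat (\<lambda>p. poly p x) (mat k k (\<lambda>(i, j). Mentry f (i + 1) (j + 1))) = hurwitz_mat h k"
    by (rule eq_matI) (auto simp: hurwitz_mat_def Mentry_eq_phi poly_phi_at_root[OF assms] algebra_simps)
  finally show ?thesis .
qed

lemma pcompose_prod_linear_factors_at_root:
  fixes s :: "'b \<Rightarrow> 'a::comm_ring_1"
  assumes "finite I" and "k \<in> I"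
  shows "(\<Prod>i\<in>I. [:- s i, 1:]) \<circ>\<^sub>p [:s k, 1:] = pCons 0 (\<Prod>i\<in>I - {k}. [:- (s i - s k), 1:])"
proof -
  have "(\<Prod>i\<in>I. [:- s i, 1:]) \<circ>\<^sub>p [:s k, 1:] = (\<Prod>i\<in>I. [:s k - s i, 1:])"
    by (simp add: pcompose_prod pcompose_pCons)
  also have "\<dots> = [:s k - s k, 1:] * (\<Prod>i\<in>I - {k}. [:s k - s i, 1:])"
    using assms by (simp add: prod.remove)
  finally show ?thesis
    by simp
qed

lemma poly_leading_minor_prod_linear_factors:
  fixes r :: "'b::linorder \<Rightarrow> complex"
  assumes "finite K" "k \<in> K" "card K \<ge> 2"
  shows "poly (leading_minor (\<Prod>i\<in>K. [:- r i, 1:]) (card K - 2)) (r k)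
    = (\<Prod>(i, j) \<in> {(i, j). i \<in> K - {k} \<and> j \<in> K - {k} \<and> i < j}. 2 * r k - r i - r j)"
proof -
  define I where "I = K - {k}"
  have card_I: "card I = card K - 1"
    using assms(1,2) by (simp add: I_def)
  then have "I \<noteq> {}"
    using assms(3) by auto
  have "poly (leading_minor (\<Prod>i\<in>K. [:- r i, 1:]) (card K - 2)) (r k)
      = det (hurwitz_mat (\<Prod>i\<in>I. [:- (r i - r k), 1:]) (card I - 1))"
    using card_I pcompose_prod_linear_factors_at_root[OF assms(1,2), of r]
    by (simp add: I_def poly_leading_minor_at_root numeral_2_eq_2)
  also have "\<dots> = (\<Prod>(i, j) \<in> {(i, j). i \<in> I \<and> j \<in> I \<and> i < j}. - (r i - r k) - (r j - r k))"
    using \<open>I \<noteq> {}\<close> assms(1) by (intro det_hurwitz_mat_prod_linear_factors) (simp_all add: I_def)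
  also have "\<dots> = (\<Prod>(i, j) \<in> {(i, j). i \<in> I \<and> j \<in> I \<and> i < j}. 2 * r k - r i - r j)"
    by (intro prod.cong) (auto simp: algebra_simps)
  finally show ?thesis
    unfolding I_def .
qed

lemma prod_ordered_pairs_Sigma:
  fixes g :: "'b::linorder \<Rightarrow> 'b \<Rightarrow> 'b \<Rightarrow> 'a::comm_monoid_mult"
  assumes "finite K"
  shows "(\<Prod>k\<in>K. \<Prod>(i, j) \<in> {(i, j). i \<in> K - {k} \<and> j \<in> K - {k} \<and> i < j}. g i j k)
    = (\<Prod>(i, j, k) \<in> {(i, j, k). i \<in> K \<and> j \<in> K \<and> k \<in> K \<and> i < j \<and> j \<noteq> k \<and> k \<noteq> i}. g i j k)"
proof -
  let ?P = "\<lambda>k. {(i, j). i \<in> K - {k} \<and> j \<in> K - {k} \<and> i < j}"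
  let ?rotate = "\<lambda>(k, i, j). (i, j, k)"
  have "finite (?P k)" for k
    using assms by (auto intro: finite_subset[of _ "K \<times> K"])
  then have "(\<Prod>k\<in>K. \<Prod>(i, j) \<in> ?P k. g i j k) = (\<Prod>(k, i, j) \<in> Sigma K ?P. g i j k)"
    using assms by (subst prod.Sigma) (auto simp: case_prod_beta)
  also have "\<dots> = (\<Prod>(i, j, k) \<in> ?rotate ` Sigma K ?P. g i j k)"
    by (subst prod.reindex) (auto simp: inj_on_def intro!: prod.cong)
  also have "?rotate ` Sigma K ?P
      = {(i, j, k). i \<in> K \<and> j \<in> K \<and> k \<in> K \<and> i < j \<and> j \<noteq> k \<and> k \<noteq> i}"
    by (auto simp: image_iff)
  finally show ?thesis .
qed

theorem theorem2:
  fixes n :: nat and f :: "complex poly" and r :: "nat \<Rightarrow> complex"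
  assumes "n \<ge> 3"
    and "f = (\<Prod>i\<in>{1..n}. [:- r i, 1:])"
  shows "(\<Prod>(i, j, k) \<in> {(i, j, k). i \<in> {1..n} \<and> j \<in> {1..n} \<and> k \<in> {1..n}
            \<and> i < j \<and> j \<noteq> k \<and> k \<noteq> i}. 2 * r k - r i - r j)
         = resultant f (leading_minor f (n - 2))"
proof -
  have "resultant f (leading_minor f (n - 2)) = (\<Prod>k\<in>{1..n}. poly (leading_minor f (n - 2)) (r k))"
    unfolding assms(2) by (rule resultant_prod_linear_factors) simp
  also have "\<dots> = (\<Prod>k\<in>{1..n}. \<Prod>(i, j) \<in> {(i, j). i \<in> {1..n} - {k} \<and> j \<in> {1..n} - {k} \<and> i < j}.
      2 * r k - r i - r j)"
    using poly_leading_minor_prod_linear_factors[of "{1..n}" _ r] assms by (intro prod.cong) auto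
  also have "\<dots> = (\<Prod>(i, j, k) \<in> {(i, j, k). i \<in> {1..n} \<and> j \<in> {1..n} \<and> k \<in> {1..n}
      \<and> i < j \<and> j \<noteq> k \<and> k \<noteq> i}. 2 * r k - r i - r j)"
    by (rule prod_ordered_pairs_Sigma) simp
  finally show ?thesis ..
qed

end
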